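(* Let $\mathcal{X}$ be an SP such that either $0$ is an absorbing state for $\mathcal{X}$ or there exists a supermartingale deflator $Y$ for $\mathcal{X}$ with $\{Y=0\}\subseteq\{X=0\}$ for all $X\in\mathcal{X}$, and let $\widetilde{T}$ be the $P$-a.s. unique stopping time such that $X=XI_{\llbracket 0,\widetilde{T}\llbracket}$ $P$-a.s. for all $X\in\mathcal{X}$ and such that there is a sequence $(\hat X^n)_{n\in\mathbb N}\subseteq\mathcal X$ with $\hat{T}^n:=\inf\{t\ge0:\hat{X}^n_t=0\}\nearrow\widetilde{T}$. Let $\tilde{\tau}:\Omega\to(0,\infty]$ be a random time such that for all $0\le s<t\le\infty$ with $P[\tilde{\tau}\in(s,t]]>0$, writing $Q^{(s,t)}:=P[\,\cdot\,|\,\tilde{\tau}\in(s,t]]$, there exists $\hat{X}^{(s,t)}\in\mathcal{X}$ which is strictly positive on $[0,s]$ $Q^{(s,t)}$-a.s., and every $X\in\mathcal{X}$ is zero on $[t,\infty)$ $Q^{(s,t)}$-a.s. Then $\tilde{\tau}=\widetilde{T}$ $P$-a.s.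
   Context: Work on a filtered probability space $(\Omega,\mathcal{F},\mathbb{F},P)$, $\mathbb{F}=(\mathcal{F}_t)_{t\ge0}$ satisfying the usual conditions, $\mathcal{F}_0$ trivial; convention $0/0=1$. $\llbracket 0,\tau\llbracket=\{(\omega,t)\in\Omega\times[0,\infty):0\le t<\tau(\omega)\}$; the interval $(s,\infty]$ includes $\infty$. A set of processes (SP) is a set $\mathcal{X}$ of processes such that: (A) each $X\in\mathcal{X}$ is an adapted, nonnegative, $P$-a.s. right-continuous process on $[0,\infty)$ with $X_0=1$; (C) for $X,X'\in\mathcal{X}$ and $\alpha\in[0,1]$, $(1-\alpha)X+\alpha X'\in\mathcal{X}$; (D) for all $t\in[0,\infty)$, $A\in\mathcal{F}_t$, $X\in\mathcal{X}$ and $X'\in\mathcal{X}$ with $\{X'_t=0\}\subseteq\{X_t=0\}$ on $A$, the process $I_{A^c}X_\cdot + I_A (X_{t\wedge\cdot}/X'_t)X'_{t\vee\cdot}$ belongs to $\mathcal{X}$. $0$ is an absorbing state if $\{X_s=0\}\subseteq\{X_t=0\}$ for every $X\in\mathcal{X}$ and $0\le s<t<\infty$. A supermartingale deflator for $\mathcal{X}$ is a process $Y$ with $XY$ a supermartingale for every $X\in\mathcal{X}$. *)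

theory Defs
  imports "HOL-Probability.Probability"
begin

type_synonym 'a proc = "real \<Rightarrow> 'a \<Rightarrow> real"

definition usual_filtration :: "'a measure \<Rightarrow> (real \<Rightarrow> 'a measure) \<Rightarrow> bool" where
  "usual_filtration M F \<longleftrightarrow>
     (\<forall>t\<ge>0. subalgebra M (F t)) \<and>
     (\<forall>s t. 0 \<le> s \<and> s \<le> t \<longrightarrow> sets (F s) \<subseteq> sets (F t)) \<and>
     (\<forall>t\<ge>0. sets (F t) = (\<Inter>u\<in>{t<..}. sets (F u))) \<and>
     (\<forall>A B. A \<subseteq> B \<and> B \<in> null_sets M \<longrightarrow> A \<in> sets M) \<and>
     (\<forall>N\<in>null_sets M. N \<in> sets (F 0)) \<and>
     (\<forall>A\<in>sets (F 0). emeasure M A = 0 \<or> emeasure M A = 1)"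

definition adapted :: "(real \<Rightarrow> 'a measure) \<Rightarrow> 'a proc \<Rightarrow> bool" where
  "adapted F X \<longleftrightarrow> (\<forall>t\<ge>0. X t \<in> borel_measurable (F t))"

definition stopping_time_F :: "'a measure \<Rightarrow> (real \<Rightarrow> 'a measure) \<Rightarrow> ('a \<Rightarrow> ennreal) \<Rightarrow> bool" where
  "stopping_time_F M F T \<longleftrightarrow>
     (\<forall>t\<ge>0. {\<omega>\<in>space M. T \<omega> \<le> ennreal t} \<in> sets (F t))"

definition div01 :: "real \<Rightarrow> real \<Rightarrow> real" where
  "div01 a b = (if a = 0 \<and> b = 0 then 1 else a / b)"

text \<open>The process I_{A^c} X + I_A (X_{t\<and>.}/X'_t) X'_{t\<or>.}: it equals X up to time t
and (X_t/X'_t) X'_s for s > t on A.\<close>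
definition paste :: "real \<Rightarrow> 'a set \<Rightarrow> 'a proc \<Rightarrow> 'a proc \<Rightarrow> 'a proc" where
  "paste t A X X' = (\<lambda>s \<omega>. if \<omega> \<in> A then (if s \<le> t then X s \<omega> else div01 (X t \<omega>) (X' t \<omega>) * X' s \<omega>)
                            else X s \<omega>)"

definition SP :: "'a measure \<Rightarrow> (real \<Rightarrow> 'a measure) \<Rightarrow> 'a proc set \<Rightarrow> bool" where
  "SP M F \<X> \<longleftrightarrow>
     (\<forall>X\<in>\<X>. adapted F X \<and> (\<forall>t\<ge>0. \<forall>\<omega>\<in>space M. X t \<omega> \<ge> 0) \<and>
        (AE \<omega> in M. \<forall>t\<ge>0. continuous (at_right t) (\<lambda>s. X s \<omega>)) \<and>
        (\<forall>\<omega>\<in>space M. X 0 \<omega> = 1)) \<and>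
     (\<forall>X\<in>\<X>. \<forall>X'\<in>\<X>. \<forall>\<alpha>::real. 0 \<le> \<alpha> \<and> \<alpha> \<le> 1 \<longrightarrow>
        (\<lambda>t \<omega>. (1 - \<alpha>) * X t \<omega> + \<alpha> * X' t \<omega>) \<in> \<X>) \<and>
     (\<forall>t\<ge>0. \<forall>A\<in>sets (F t). \<forall>X\<in>\<X>. \<forall>X'\<in>\<X>.
        (\<forall>\<omega>\<in>A. X' t \<omega> = 0 \<longrightarrow> X t \<omega> = 0) \<longrightarrow> paste t A X X' \<in> \<X>)"

definition absorbing_zero :: "'a measure \<Rightarrow> 'a proc set \<Rightarrow> bool" where
  "absorbing_zero M \<X> \<longleftrightarrow>
     (\<forall>X\<in>\<X>. \<forall>s t. 0 \<le> s \<and> s < t \<longrightarrow>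
        {\<omega>\<in>space M. X s \<omega> = 0} \<subseteq> {\<omega>\<in>space M. X t \<omega> = 0})"

definition supermartingale_F :: "'a measure \<Rightarrow> (real \<Rightarrow> 'a measure) \<Rightarrow> 'a proc \<Rightarrow> bool" where
  "supermartingale_F M F Z \<longleftrightarrow>
     adapted F Z \<and> (\<forall>t\<ge>0. integrable M (Z t)) \<and>
     (\<forall>s t. 0 \<le> s \<and> s \<le> t \<longrightarrow> (AE \<omega> in M. real_cond_exp M (F s) (Z t) \<omega> \<le> Z s \<omega>))"

definition supermartingale_deflator :: "'a measure \<Rightarrow> (real \<Rightarrow> 'a measure) \<Rightarrow> 'a proc set \<Rightarrow> 'a proc \<Rightarrow> bool" where
  "supermartingale_deflator M F \<X> Y \<longleftrightarrow>
     (\<forall>X\<in>\<X>. supermartingale_F M F (\<lambda>t \<omega>. X t \<omega> * Y t \<omega>))"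

text \<open>First hitting time of zero, inf {t \<ge> 0. X_t = 0} (inf of the empty set is \<infinity>).\<close>
definition hit0 :: "'a proc \<Rightarrow> 'a \<Rightarrow> ennreal" where
  "hit0 X \<omega> = Inf (ennreal ` {t. 0 \<le> t \<and> X t \<omega> = 0})"

end

theory Submission
  imports Defs
begin

text \<open>Two random times agree almost surely as soon as, for every level q > 0, they lie below q on
  the same events. Condition on the window 0 < \<tau> \<le> q: there every process of \<X> is dead from q
  on, so the hitting times of the approximating sequence, and hence their limit T, are at most q.
  Condition on the window q < \<tau>: there some process of \<X> is still alive at q, which is
  impossible unless q < T, since all processes vanish from T on.\<close>

lemma AE_imp_of_AE_uniform_measure:
  assumes "finite_measure M" "A \<in> sets M"
    and "measure M A > 0 \<Longrightarrow> AE x in uniform_measure M A. P x"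
  shows "AE x in M. x \<in> A \<longrightarrow> P x"
proof -
  interpret finite_measure M by fact
  show ?thesis
  proof (cases "measure M A > 0")
    case True
    then have "emeasure M A \<noteq> 0" "emeasure M A < \<infinity>"
      by (auto simp: emeasure_eq_measure)
    then show ?thesis
      using assms(2) assms(3)[OF True] by (simp add: AE_uniform_measure[symmetric])
  next
    case False
    then have "A \<in> null_sets M"
      using assms(2) measure_nonneg[of M A] by (simp add: emeasure_eq_measure null_setsI)
    then show ?thesis
      by (auto dest: AE_not_in elim: AE_mp)
  qed
qed

lemma ennreal_eq_if_le_rat_iff:
  fixes a b :: ennreal
  assumes "0 < a"
    and levels: "\<And>q::rat. 0 < q \<Longrightarrow> a \<le> ennreal (of_rat q) \<longleftrightarrow> b \<le> ennreal (of_rat q)"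
  shows "a = b"
proof (rule ccontr)
  have separated: False if "x < ennreal (of_rat q)" "ennreal (of_rat q) < y" "{x, y} = {a, b}"
    for x y q
  proof -
    have "0 < ennreal (of_rat q)"
      using zero_le[of x] that(1) by (rule le_less_trans)
    then have "0 < q" by simp
    with levels[of q] that(1-3) show False
      by (auto simp: doubleton_eq_iff dest: leD less_imp_le)
  qed
  assume "a \<noteq> b"
  then consider "a < b" | "b < a" by (meson linorder_neqE)
  then show False
  proof cases
    case 1
    then obtain q :: rat where "a < ennreal (of_rat q)" "ennreal (of_rat q) < b"
      using ennreal_rat_dense by blast
    then show False by (intro separated[of a q b]) auto
  next
    case 2
    then obtain q :: rat where "b < ennreal (of_rat q)" "ennreal (of_rat q) < a"
      using ennreal_rat_dense by blast
    then show False by (intro separated[of b q a]) auto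
  qed
qed

lemma AE_eq_if_AE_le_iff:
  fixes f g :: "'a \<Rightarrow> ennreal"
  assumes "AE x in M. 0 < f x"
    and "\<And>r::real. 0 < r \<Longrightarrow> AE x in M. f x \<le> ennreal r \<longleftrightarrow> g x \<le> ennreal r"
  shows "AE x in M. f x = g x"
proof -
  have "AE x in M. \<forall>q::rat. 0 < q \<longrightarrow> (f x \<le> ennreal (of_rat q) \<longleftrightarrow> g x \<le> ennreal (of_rat q))"
    using assms(2) by (simp add: AE_all_countable)
  with assms(1) show ?thesis
    by eventually_elim (blast intro: ennreal_eq_if_le_rat_iff)
qed

lemma hit0_le_if_vanishing_from:
  fixes X :: "'a proc"
  assumes "0 \<le> r" "\<forall>u. 0 \<le> u \<and> ennreal r \<le> ennreal u \<longrightarrow> X u \<omega> = 0"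
  shows "hit0 X \<omega> \<le> ennreal r"
  unfolding hit0_def using assms by (auto intro!: Inf_lower)

lemma AE_lifetime_le_if_vanishing_from:
  fixes Xh :: "nat \<Rightarrow> 'a proc"
  assumes "0 \<le> r"
    and "AE \<omega> in N. (\<lambda>n. hit0 (Xh n) \<omega>) \<longlonglongrightarrow> T \<omega>"
    and "\<And>n. AE \<omega> in N. \<forall>u. 0 \<le> u \<and> ennreal r \<le> ennreal u \<longrightarrow> Xh n u \<omega> = 0"
  shows "AE \<omega> in N. T \<omega> \<le> ennreal r"
proof -
  have "AE \<omega> in N. \<forall>n. \<forall>u. 0 \<le> u \<and> ennreal r \<le> ennreal u \<longrightarrow> Xh n u \<omega> = 0"
    using assms(3) by (simp add: AE_all_countable)
  with assms(2) show ?thesis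
    by eventually_elim
      (meson LIMSEQ_le_const2 hit0_le_if_vanishing_from[OF \<open>0 \<le> r\<close>])
qed

lemma AE_lifetime_gt_if_positive_until:
  fixes X :: "'a proc"
  assumes "0 \<le> r"
    and "AE \<omega> in N. \<forall>u. 0 \<le> u \<and> u \<le> r \<longrightarrow> X u \<omega> > 0"
    and "AE \<omega> in N. \<forall>t\<ge>0. X t \<omega> = (if ennreal t < T \<omega> then X t \<omega> else 0)"
  shows "AE \<omega> in N. ennreal r < T \<omega>"
  using assms(2,3)
proof eventually_elim
  case (elim \<omega>)
  then have "X r \<omega> > 0" "X r \<omega> = (if ennreal r < T \<omega> then X r \<omega> else 0)"
    using \<open>0 \<le> r\<close> by auto
  then show ?case by (cases "ennreal r < T \<omega>") auto
qed

lemma AE_random_time_le_iff_lifetime_le: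
  fixes M :: "'a measure" and \<tau> T :: "'a \<Rightarrow> ennreal" and r :: real
  defines "early \<equiv> {\<omega>\<in>space M. 0 < \<tau> \<omega> \<and> \<tau> \<omega> \<le> ennreal r}"
    and "late \<equiv> {\<omega>\<in>space M. ennreal r < \<tau> \<omega>}"
  assumes "finite_measure M" "\<tau> \<in> borel_measurable M" "\<forall>\<omega>\<in>space M. 0 < \<tau> \<omega>" "0 \<le> r"
    and Xh: "\<forall>n. Xh n \<in> \<X>" "AE \<omega> in M. (\<lambda>n. hit0 (Xh n) \<omega>) \<longlonglongrightarrow> T \<omega>"
    and dead: "\<forall>X\<in>\<X>. AE \<omega> in M. \<forall>t\<ge>0. X t \<omega> = (if ennreal t < T \<omega> then X t \<omega> else 0)"
    and vanishing: "measure M early > 0 \<Longrightarrow>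
      \<forall>X\<in>\<X>. AE \<omega> in uniform_measure M early. \<forall>u. 0 \<le> u \<and> ennreal r \<le> ennreal u \<longrightarrow> X u \<omega> = 0"
    and positive: "measure M late > 0 \<Longrightarrow>
      \<exists>X\<in>\<X>. AE \<omega> in uniform_measure M late. \<forall>u. 0 \<le> u \<and> u \<le> r \<longrightarrow> X u \<omega> > 0"
  shows "AE \<omega> in M. \<tau> \<omega> \<le> ennreal r \<longleftrightarrow> T \<omega> \<le> ennreal r"
proof -
  interpret finite_measure M by fact
  have sets: "early \<in> sets M" "late \<in> sets M"
    unfolding early_def late_def using \<open>\<tau> \<in> borel_measurable M\<close> by measurable
  have "AE \<omega> in M. \<omega> \<in> early \<longrightarrow> T \<omega> \<le> ennreal r"
  proof (rule AE_imp_of_AE_uniform_measure[OF finite_measure_axioms sets(1)])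
    assume "measure M early > 0"
    with vanishing Xh(1)
    have "AE \<omega> in uniform_measure M early. \<forall>u. 0 \<le> u \<and> ennreal r \<le> ennreal u \<longrightarrow> Xh n u \<omega> = 0"
      for n by blast
    moreover have "AE \<omega> in uniform_measure M early. (\<lambda>n. hit0 (Xh n) \<omega>) \<longlonglongrightarrow> T \<omega>"
      using Xh(2) by (auto intro!: AE_uniform_measureI[OF sets(1)] elim: AE_mp)
    ultimately show "AE \<omega> in uniform_measure M early. T \<omega> \<le> ennreal r"
      by (intro AE_lifetime_le_if_vanishing_from[OF \<open>0 \<le> r\<close>])
  qed
  moreover have "AE \<omega> in M. \<omega> \<in> late \<longrightarrow> ennreal r < T \<omega>"
  proof (rule AE_imp_of_AE_uniform_measure[OF finite_measure_axioms sets(2)])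
    assume "measure M late > 0"
    then obtain X where "X \<in> \<X>"
      and "AE \<omega> in uniform_measure M late. \<forall>u. 0 \<le> u \<and> u \<le> r \<longrightarrow> X u \<omega> > 0"
      using positive by blast
    with dead show "AE \<omega> in uniform_measure M late. ennreal r < T \<omega>"
      by (intro AE_lifetime_gt_if_positive_until[OF \<open>0 \<le> r\<close>])
        (auto intro!: AE_uniform_measureI[OF sets(2)] elim: AE_mp)
  qed
  ultimately show ?thesis
    using AE_space by eventually_elim (use assms(5) in \<open>auto simp: early_def late_def\<close>)
qed

theorem propositionA9:
  fixes M :: "'a measure" and F :: "real \<Rightarrow> 'a measure" and \<X> :: "'a proc set"
    and Tt :: "'a \<Rightarrow> ennreal" and \<tau> :: "'a \<Rightarrow> ennreal"
  assumes "prob_space M"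
    and "usual_filtration M F"
    and "SP M F \<X>"
    and "absorbing_zero M \<X> \<or>
         (\<exists>Y. supermartingale_deflator M F \<X> Y \<and>
              (\<forall>X\<in>\<X>. \<forall>t\<ge>0. \<forall>\<omega>\<in>space M. Y t \<omega> = 0 \<longrightarrow> X t \<omega> = 0))"
    and "stopping_time_F M F Tt"
    and "\<forall>X\<in>\<X>. AE \<omega> in M. \<forall>t\<ge>0. X t \<omega> = (if ennreal t < Tt \<omega> then X t \<omega> else 0)"
    and "\<exists>Xh :: nat \<Rightarrow> 'a proc. (\<forall>n. Xh n \<in> \<X>) \<and>
           (AE \<omega> in M. incseq (\<lambda>n. hit0 (Xh n) \<omega>) \<and> (\<lambda>n. hit0 (Xh n) \<omega>) \<longlonglongrightarrow> Tt \<omega>)"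
    and "\<tau> \<in> borel_measurable M"
    and "\<forall>\<omega>\<in>space M. \<tau> \<omega> > 0"
    and "\<forall>(s::real) (t::ennreal). 0 \<le> s \<and> ennreal s < t \<and>
           measure M {\<omega>\<in>space M. ennreal s < \<tau> \<omega> \<and> \<tau> \<omega> \<le> t} > 0 \<longrightarrow>
           (let Q = uniform_measure M {\<omega>\<in>space M. ennreal s < \<tau> \<omega> \<and> \<tau> \<omega> \<le> t} in
             (\<exists>Xh\<in>\<X>. AE \<omega> in Q. \<forall>u. 0 \<le> u \<and> u \<le> s \<longrightarrow> Xh u \<omega> > 0) \<and>
             (\<forall>X\<in>\<X>. AE \<omega> in Q. \<forall>u. 0 \<le> u \<and> t \<le> ennreal u \<longrightarrow> X u \<omega> = 0))"
  shows "AE \<omega> in M. \<tau> \<omega> = Tt \<omega>"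
proof (rule AE_eq_if_AE_le_iff)
  interpret prob_space M by fact
  obtain Xh :: "nat \<Rightarrow> 'a proc" where Xh: "\<forall>n. Xh n \<in> \<X>"
    "AE \<omega> in M. (\<lambda>n. hit0 (Xh n) \<omega>) \<longlonglongrightarrow> Tt \<omega>"
    using assms(7) by (auto elim: AE_mp)
  show "AE \<omega> in M. 0 < \<tau> \<omega>"
    using assms(9) by (simp add: AE_I2)
  fix r :: real
  assume "0 < r"
  from assms(10)[rule_format, of 0 "ennreal r"] assms(10)[rule_format, of r \<top>] \<open>0 < r\<close>
  show "AE \<omega> in M. \<tau> \<omega> \<le> ennreal r \<longleftrightarrow> Tt \<omega> \<le> ennreal r"
    by (intro AE_random_time_le_iff_lifetime_le[OF finite_measure_axioms assms(8,9) _ Xh assms(6)])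
      (simp_all add: Let_def)
qed

end
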